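(* Let $\mathfrak{X}=\mathfrak{X}_{(\Gamma_q,i_q)_q}$ be a Bourgain–Delbaen space, let $\Gamma'$ be a self-determined subset of $\Gamma$, let $\mathfrak{X}'=\mathfrak{X}_{(\Gamma'_{q_s},i'_{q_s})_s}$ be the Bourgain–Delbaen space determined by $\Gamma'$ (as described in the context), and let $Y$ be the closed linear span of $\{d_\gamma:\gamma\in\Gamma\setminus\Gamma'\}$. Then the restriction map $R:\ell_\infty(\Gamma)\to\ell_\infty(\Gamma')$ maps $\mathfrak{X}$ onto $\mathfrak{X}'$ and the kernel of $R|_{\mathfrak{X}}$ is $Y$. Hence $\mathfrak{X}/Y$ is isomorphic to $\mathfrak{X}'$.
   Context: Bourgain–Delbaen spaces: given a strictly increasing sequence $(\Gamma_q)_q$ of non-empty finite sets with union $\Gamma$ and linear extension operators $i_q:\ell_\infty(\Gamma_q)\to\ell_\infty(\Gamma)$ ($i_q(x)|_{\Gamma_q}=x$) with $\sup_q\|i_q\|<\infty$ that are compatible (for $p<q$, $i_p=i_q\circ r_q\circ i_p$, with $r_q$ restriction onto $\Gamma_q$), set $\Delta_1=\Gamma_1$, $\Delta_{q+1}=\Gamma_{q+1}\setminus\Gamma_q$, $d_\gamma=i_q(e_\gamma)$ for $\gamma\in\Delta_q$; $\mathfrak{X}_{(\Gamma_q,i_q)_q}$ is the closed span of $\{d_\gamma\}$ in $\ell_\infty(\Gamma)$. $e_\gamma^*$ denotes evaluation at $\gamma$ restricted to the space, $(d_\gamma^* )$ the functionals biorthogonal to $(d_\gamma)$. An infinite subset $\Gamma'\subseteq\Gamma$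 is self-determined if each $d_\gamma^*$, $\gamma\in\Gamma'$, lies in the linear span of $\{e_\eta^*:\eta\in\Gamma'\}$. For such $\Gamma'$: write $\{q:\Gamma'\cap\Delta_q\neq\varnothing\}=\{q_0<q_1<\cdots\}$, $\Gamma'_q=\Gamma'\cap\Gamma_q$, $R$ = restriction onto $\Gamma'$, and $i'_{q_s}:\ell_\infty(\Gamma'_{q_s})\to\ell_\infty(\Gamma')$, $i'_{q_s}(x)=R(i_{q_s}(x))$ ($x$ extended by zero to $\Gamma_{q_s}$). The sequence $(i'_{q_s})_s$ is a uniformly bounded compatible sequence of extension operators, so it defines the Bourgain–Delbaen space $\mathfrak{X}_{(\Gamma'_{q_s},i'_{q_s})_s}\subseteq\ell_\infty(\Gamma')$. *)

theory Defs
  imports Complex_Main "HOL-Library.Infinite_Set"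
begin

text \<open>Elements of ell-infinity(A) are represented as real-valued functions on the
  ambient type that are bounded on A and vanish outside A.\<close>

definition linf :: "'g set \<Rightarrow> ('g \<Rightarrow> real) set" where
  "linf A = {f. bdd_above ((\<lambda>x. \<bar>f x\<bar>) ` A) \<and> (\<forall>x. x \<notin> A \<longrightarrow> f x = 0)}"

definition supnorm :: "'g set \<Rightarrow> ('g \<Rightarrow> real) \<Rightarrow> real" where
  "supnorm A f = Sup ((\<lambda>x. \<bar>f x\<bar>) ` A)"

definition restr :: "('g \<Rightarrow> real) \<Rightarrow> 'g set \<Rightarrow> ('g \<Rightarrow> real)" where
  "restr f A = (\<lambda>x. if x \<in> A then f x else 0)"

definition cspan :: "'g set \<Rightarrow> 'i set \<Rightarrow> ('i \<Rightarrow> 'g \<Rightarrow> real) \<Rightarrow> ('g \<Rightarrow> real) set" where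
  "cspan A J d = {f \<in> linf A. \<forall>e>0. \<exists>F c. finite F \<and> F \<subseteq> J \<and>
       supnorm A (\<lambda>x. f x - (\<Sum>i\<in>F. c i * d i x)) < e}"

definition Gam :: "(nat \<Rightarrow> 'g set) \<Rightarrow> 'g set" where
  "Gam G = (\<Union>q. G q)"

fun Delta :: "(nat \<Rightarrow> 'g set) \<Rightarrow> nat \<Rightarrow> 'g set" where
  "Delta G 0 = G 0"
| "Delta G (Suc q) = G (Suc q) - G q"

definition unitv :: "'g \<Rightarrow> 'g \<Rightarrow> real" where
  "unitv \<gamma> = (\<lambda>\<eta>. if \<eta> = \<gamma> then 1 else 0)"

text \<open>Bourgain--Delbaen data (indexing of the levels starts at 0)\<close>
definition bd_data :: "(nat \<Rightarrow> 'g set) \<Rightarrow> (nat \<Rightarrow> ('g \<Rightarrow> real) \<Rightarrow> ('g \<Rightarrow> real)) \<Rightarrow> bool" where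
  "bd_data G I \<longleftrightarrow>
     (\<forall>q. finite (G q) \<and> G q \<noteq> {}) \<and>
     (\<forall>q. G q \<subset> G (Suc q)) \<and>
     (\<forall>q. \<forall>x\<in>linf (G q). I q x \<in> linf (Gam G) \<and> restr (I q x) (G q) = x) \<and>
     (\<forall>q. \<forall>x\<in>linf (G q). \<forall>y\<in>linf (G q). \<forall>a b.
          I q (\<lambda>g. a * x g + b * y g) = (\<lambda>g. a * I q x g + b * I q y g)) \<and>
     (\<exists>C. \<forall>q. \<forall>x\<in>linf (G q). supnorm (Gam G) (I q x) \<le> C * supnorm (G q) x) \<and>
     (\<forall>p q. p < q \<longrightarrow> (\<forall>x\<in>linf (G p). I p x = I q (restr (I p x) (G q))))"

definition lvl :: "(nat \<Rightarrow> 'g set) \<Rightarrow> 'g \<Rightarrow> nat" where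
  "lvl G \<gamma> = (LEAST q. \<gamma> \<in> G q)"

definition bd_d :: "(nat \<Rightarrow> 'g set) \<Rightarrow> (nat \<Rightarrow> ('g \<Rightarrow> real) \<Rightarrow> ('g \<Rightarrow> real)) \<Rightarrow> 'g \<Rightarrow> 'g \<Rightarrow> real" where
  "bd_d G I \<gamma> = I (lvl G \<gamma>) (unitv \<gamma>)"

definition bd_space :: "(nat \<Rightarrow> 'g set) \<Rightarrow> (nat \<Rightarrow> ('g \<Rightarrow> real) \<Rightarrow> ('g \<Rightarrow> real)) \<Rightarrow> ('g \<Rightarrow> real) set" where
  "bd_space G I = cspan (Gam G) (Gam G) (bd_d G I)"

text \<open>Self-determined: d_gamma^* (gamma in Gamma') is a finite linear combination of the
  evaluation functionals e_eta^* (eta in Gamma'), restricted to the space.  Since the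
  d_eta span a dense subspace and all functionals involved are bounded, equality of
  functionals on the space is equality on every d_eta, where d_gamma^* is given by
  biorthogonality.\<close>
definition self_determined :: "(nat \<Rightarrow> 'g set) \<Rightarrow> (nat \<Rightarrow> ('g \<Rightarrow> real) \<Rightarrow> ('g \<Rightarrow> real)) \<Rightarrow> 'g set \<Rightarrow> bool" where
  "self_determined G I \<Gamma>' \<longleftrightarrow> infinite \<Gamma>' \<and> \<Gamma>' \<subseteq> Gam G \<and>
     (\<forall>\<gamma>\<in>\<Gamma>'. \<exists>F c. finite F \<and> F \<subseteq> \<Gamma>' \<and>
        (\<forall>\<eta>\<in>Gam G. (\<Sum>\<zeta>\<in>F. c \<zeta> * bd_d G I \<eta> \<zeta>) = (if \<eta> = \<gamma> then 1 else 0)))"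

definition sd_levels :: "(nat \<Rightarrow> 'g set) \<Rightarrow> 'g set \<Rightarrow> nat set" where
  "sd_levels G \<Gamma>' = {q. \<Gamma>' \<inter> Delta G q \<noteq> {}}"

definition sub_G :: "(nat \<Rightarrow> 'g set) \<Rightarrow> 'g set \<Rightarrow> nat \<Rightarrow> 'g set" where
  "sub_G G \<Gamma>' s = \<Gamma>' \<inter> G (enumerate (sd_levels G \<Gamma>') s)"

definition sub_I :: "(nat \<Rightarrow> 'g set) \<Rightarrow> (nat \<Rightarrow> ('g \<Rightarrow> real) \<Rightarrow> ('g \<Rightarrow> real)) \<Rightarrow> 'g set
                      \<Rightarrow> nat \<Rightarrow> ('g \<Rightarrow> real) \<Rightarrow> ('g \<Rightarrow> real)" where
  "sub_I G I \<Gamma>' s x = restr (I (enumerate (sd_levels G \<Gamma>') s) x) \<Gamma>'"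

end

theory Submission
  imports Defs
begin

text \<open>The vectors \<open>d\<^sub>\<gamma>\<close> are triangular with respect to levels: \<open>d\<^sub>\<gamma>(\<xi>) = 0\<close> whenever
  \<open>\<xi> \<noteq> \<gamma>\<close> has level at most that of \<open>\<gamma>\<close>.  Combined with self-determination this forces
  \<open>d\<^sub>\<eta>\<close> to vanish on \<open>\<Gamma>'\<close> for every \<open>\<eta> \<notin> \<Gamma>'\<close>.  Hence the level projections
  \<open>P\<^sub>q = i\<^sub>q \<circ> r\<^sub>q\<close>, which converge strongly to the identity on the space, split \<open>P\<^sub>q x\<close> into
  \<open>i\<^sub>q\<close> of the part of \<open>x\<close> on \<open>\<Gamma>' \<inter> \<Gamma>\<^sub>q\<close>, of norm at most \<open>C \<parallel>Rx\<parallel>\<close>, plus an element of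
  \<open>span {d\<^sub>\<eta> | \<eta> \<notin> \<Gamma>'}\<close>.  This identifies the kernel of \<open>R\<close> with \<open>Y\<close> and gives the quotient
  estimate \<open>dist(x, Y) \<le> (1 + C) \<parallel>Rx\<parallel>\<close>.  Since \<open>R\<close> maps \<open>d\<^sub>\<gamma>\<close> (\<open>\<gamma> \<in> \<Gamma>'\<close>) to the
  corresponding vector of the restricted system, \<open>R\<close> maps the space into \<open>\<frakX>'\<close>; the quotient
  estimate lifts approximations of an element of \<open>\<frakX>'\<close> to a geometrically convergent series
  in the space, which gives surjectivity.\<close>

section \<open>Bounded functions and the sup norm\<close>

abbreviation bdd_abs :: "'g set \<Rightarrow> ('g \<Rightarrow> real) \<Rightarrow> bool" where
  "bdd_abs A f \<equiv> bdd_above ((\<lambda>x. \<bar>f x\<bar>) ` A)"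

lemma abs_le_supnorm: "bdd_abs A f \<Longrightarrow> x \<in> A \<Longrightarrow> \<bar>f x\<bar> \<le> supnorm A f"
  unfolding supnorm_def by (rule cSUP_upper)

lemma supnorm_least: "A \<noteq> {} \<Longrightarrow> (\<And>x. x \<in> A \<Longrightarrow> \<bar>f x\<bar> \<le> M) \<Longrightarrow> supnorm A f \<le> M"
  unfolding supnorm_def by (rule cSUP_least)

lemma supnorm_nonneg: "A \<noteq> {} \<Longrightarrow> bdd_abs A f \<Longrightarrow> 0 \<le> supnorm A f"
proof -
  assume "A \<noteq> {}" "bdd_abs A f"
  then obtain x where "x \<in> A" by blast
  then show ?thesis using abs_le_supnorm[OF \<open>bdd_abs A f\<close>, of x] by linarith
qed

lemma supnorm_cong: "(\<And>x. x \<in> A \<Longrightarrow> f x = g x) \<Longrightarrow> supnorm A f = supnorm A g"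
  unfolding supnorm_def by (rule arg_cong[where f=Sup], rule image_cong) auto

lemma supnorm_zero: "A \<noteq> {} \<Longrightarrow> supnorm A (\<lambda>_. 0) = 0"
  unfolding supnorm_def by simp

lemma supnorm_subset:
  assumes "B \<subseteq> A" "B \<noteq> {}" "bdd_abs A f"
  shows "supnorm B f \<le> supnorm A f"
  using assms abs_le_supnorm[OF assms(3)] by (intro supnorm_least) auto

lemma linfI: "(\<And>x. x \<in> A \<Longrightarrow> \<bar>f x\<bar> \<le> M) \<Longrightarrow> (\<And>x. x \<notin> A \<Longrightarrow> f x = 0) \<Longrightarrow> f \<in> linf A"
  unfolding linf_def using bdd_aboveI2[of A "\<lambda>x. \<bar>f x\<bar>" M] by simp

lemma linf_bdd: "f \<in> linf A \<Longrightarrow> bdd_abs A f"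
  by (simp add: linf_def)

lemma linf_zero: "f \<in> linf A \<Longrightarrow> x \<notin> A \<Longrightarrow> f x = 0"
  by (simp add: linf_def)

lemma linf_abs_le: "f \<in> linf A \<Longrightarrow> x \<in> A \<Longrightarrow> \<bar>f x\<bar> \<le> supnorm A f"
  by (rule abs_le_supnorm[OF linf_bdd])

lemma linf_lin:
  assumes f: "f \<in> linf A" and g: "g \<in> linf A"
  shows "(\<lambda>x. a * f x + b * g x) \<in> linf A"
proof (rule linfI)
  fix x assume "x \<in> A"
  have "\<bar>a * f x + b * g x\<bar> \<le> \<bar>a\<bar> * \<bar>f x\<bar> + \<bar>b\<bar> * \<bar>g x\<bar>"
    using abs_triangle_ineq[of "a * f x" "b * g x"] by (simp add: abs_mult)
  also have "\<dots> \<le> \<bar>a\<bar> * supnorm A f + \<bar>b\<bar> * supnorm A g"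
    using linf_abs_le[OF f \<open>x \<in> A\<close>] linf_abs_le[OF g \<open>x \<in> A\<close>] by (simp add: add_mono mult_left_mono)
  finally show "\<bar>a * f x + b * g x\<bar> \<le> \<bar>a\<bar> * supnorm A f + \<bar>b\<bar> * supnorm A g" .
next
  fix x assume "x \<notin> A"
  then show "a * f x + b * g x = 0" using f g by (simp add: linf_zero)
qed

lemma linf_0: "(\<lambda>_. 0) \<in> linf A"
  by (rule linfI[of _ _ 0]) auto

lemma linf_diff: "f \<in> linf A \<Longrightarrow> g \<in> linf A \<Longrightarrow> (\<lambda>x. f x - g x) \<in> linf A"
  using linf_lin[of f A g 1 "-1"] by simp

lemma linf_sum:
  "finite F \<Longrightarrow> (\<And>i. i \<in> F \<Longrightarrow> f i \<in> linf A) \<Longrightarrow> (\<lambda>x. \<Sum>i\<in>F. c i * f i x) \<in> linf A"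
proof (induction F rule: finite_induct)
  case (insert i F)
  then have "(\<lambda>x. c i * f i x + 1 * (\<Sum>j\<in>F. c j * f j x)) \<in> linf A"
    by (intro linf_lin) auto
  with insert show ?case by simp
qed (simp add: linf_0)

lemma linf_restr: "f \<in> linf A \<Longrightarrow> B \<subseteq> A \<Longrightarrow> B \<subseteq> C \<Longrightarrow> restr f B \<in> linf C"
proof (rule linfI[of _ _ "max 0 (supnorm A f)"])
  fix x assume "f \<in> linf A" "B \<subseteq> A" "x \<in> C"
  then show "\<bar>restr f B x\<bar> \<le> max 0 (supnorm A f)"
    using linf_abs_le[of f A x] by (auto simp: restr_def le_max_iff_disj)
qed (auto simp: restr_def)

lemma sum_restrict_coeffs:
  "finite H \<Longrightarrow> F \<subseteq> H \<Longrightarrow> (\<Sum>i\<in>H. (if i \<in> F then c i else 0) * (f i :: real)) = (\<Sum>i\<in>F. c i * f i)"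
proof -
  assume "finite H" "F \<subseteq> H"
  have "(\<Sum>i\<in>H. (if i \<in> F then c i else 0) * f i) = (\<Sum>i\<in>H. if i \<in> F then c i * f i else 0)"
    by (rule sum.cong) auto
  also have "\<dots> = (\<Sum>i\<in>F. c i * f i)"
    using \<open>finite H\<close> \<open>F \<subseteq> H\<close> by (simp add: sum.inter_restrict[symmetric] Int_absorb1)
  finally show ?thesis .
qed

lemma sum_merge_coeffs:
  assumes "finite F1" "finite F2"
  shows "(\<Sum>i\<in>F1 \<union> F2. (a * (if i \<in> F1 then c1 i else 0) + b * (if i \<in> F2 then c2 i else 0)) * f i)
    = a * (\<Sum>i\<in>F1. c1 i * f i) + b * (\<Sum>i\<in>F2. c2 i * (f i :: real))"
proof -
  have fin: "finite (F1 \<union> F2)" using assms by simp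
  have "(\<Sum>i\<in>F1 \<union> F2. (a * (if i \<in> F1 then c1 i else 0) + b * (if i \<in> F2 then c2 i else 0)) * f i)
      = a * (\<Sum>i\<in>F1 \<union> F2. (if i \<in> F1 then c1 i else 0) * f i)
        + b * (\<Sum>i\<in>F1 \<union> F2. (if i \<in> F2 then c2 i else 0) * f i)"
    by (simp add: distrib_right sum.distrib sum_distrib_left mult.assoc)
  then show ?thesis
    by (simp only: sum_restrict_coeffs[OF fin] Un_upper1 Un_upper2)
qed

lemma geometric_tail_bound:
  fixes V :: "nat \<Rightarrow> real"
  assumes V: "\<And>n. \<bar>V n\<bar> \<le> K * (1/2)^n"
  shows "summable V" and "\<bar>\<Sum>n. V (n + N)\<bar> \<le> 2 * K * (1/2)^N"
proof -
  have geo: "summable (\<lambda>n. K * (1/2::real)^n)" by (rule summable_mult) (simp add: summable_geometric)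
  show "summable V" by (rule summable_comparison_test'[OF geo]) (use V in simp)
  have geoN: "summable (\<lambda>n. K * (1/2::real)^(n + N))" by (rule summable_ignore_initial_segment[OF geo])
  have absN: "summable (\<lambda>n. \<bar>V (n + N)\<bar>)" by (rule summable_comparison_test'[OF geoN]) (use V in simp)
  have "\<bar>\<Sum>n. V (n + N)\<bar> \<le> (\<Sum>n. \<bar>V (n + N)\<bar>)" by (rule summable_rabs[OF absN])
  also have "\<dots> \<le> (\<Sum>n. K * (1/2::real)^(n + N))" by (rule suminf_le[OF _ absN geoN]) (use V in simp)
  also have "(\<Sum>n. K * (1/2::real)^(n + N)) = (\<Sum>n. (K * (1/2)^N) * (1/2::real)^n)"
    by (simp add: power_add mult_ac)
  also have "\<dots> = (K * (1/2)^N) * (\<Sum>n. (1/2::real)^n)" by (rule suminf_mult) (simp add: summable_geometric)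
  also have "(\<Sum>n. (1/2::real)^n) = 2" using suminf_geometric[of "1/2::real"] by simp
  finally show "\<bar>\<Sum>n. V (n + N)\<bar> \<le> 2 * K * (1/2)^N" by simp
qed

lemma LIMSEQ_geometric_approx:
  fixes W :: "nat \<Rightarrow> real"
  assumes "\<And>n. \<bar>x - W n\<bar> < (1/2)^n"
  shows "W \<longlonglongrightarrow> x"
proof (rule tendsto_sandwich[of "\<lambda>n. x - (1/2)^n" _ _ "\<lambda>n. x + (1/2)^n"])
  have "x - (1/2)^n \<le> W n \<and> W n \<le> x + (1/2)^n" for n
    using assms[of n] by (simp add: abs_less_iff)
  then show "\<forall>\<^sub>F n in sequentially. x - (1/2)^n \<le> W n" "\<forall>\<^sub>F n in sequentially. W n \<le> x + (1/2)^n"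
    by (simp_all add: always_eventually)
qed (auto intro!: tendsto_eq_intros LIMSEQ_power_zero)

section \<open>Closed spans\<close>

lemma cspan_linf: "f \<in> cspan A J d \<Longrightarrow> f \<in> linf A"
  by (simp add: cspan_def)

lemma cspan_mono: "J \<subseteq> J' \<Longrightarrow> cspan A J d \<subseteq> cspan A J' d"
  unfolding cspan_def by (fastforce dest: order_trans)

context
  fixes A :: "'g set" and J :: "'i set" and d :: "'i \<Rightarrow> 'g \<Rightarrow> real"
  assumes A_nonempty: "A \<noteq> {}" and d_linf: "\<And>i. i \<in> J \<Longrightarrow> d i \<in> linf A"
begin

lemma sum_in_cspan:
  assumes "finite F" "F \<subseteq> J"
  shows "(\<lambda>x. \<Sum>i\<in>F. c i * d i x) \<in> cspan A J d"
proof -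
  have "supnorm A (\<lambda>x. (\<Sum>i\<in>F. c i * d i x) - (\<Sum>i\<in>F. c i * d i x)) = 0"
    by (simp add: supnorm_zero[OF A_nonempty])
  then show ?thesis
    unfolding cspan_def using assms d_linf by (auto intro!: linf_sum exI[of _ F] exI[of _ c])
qed

lemma cspan_approx:
  assumes "f \<in> cspan A J d" "e > 0"
  obtains F c where "finite F" "F \<subseteq> J" "\<And>x. x \<in> A \<Longrightarrow> \<bar>f x - (\<Sum>i\<in>F. c i * d i x)\<bar> < e"
proof -
  obtain F c where F: "finite F" "F \<subseteq> J" and e: "supnorm A (\<lambda>x. f x - (\<Sum>i\<in>F. c i * d i x)) < e"
    using assms unfolding cspan_def by blast
  have "(\<lambda>x. f x - (\<Sum>i\<in>F. c i * d i x)) \<in> linf A"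
    using F d_linf assms(1) by (intro linf_diff linf_sum) (auto simp: cspan_def)
  then have "\<bar>f x - (\<Sum>i\<in>F. c i * d i x)\<bar> < e" if "x \<in> A" for x
    using linf_abs_le[OF _ that] e by fastforce
  then show ?thesis using that[OF F] by blast
qed

lemma cspan_lin:
  assumes f: "f \<in> cspan A J d" and g: "g \<in> cspan A J d"
  shows "(\<lambda>x. a * f x + b * g x) \<in> cspan A J d"
proof -
  have "\<exists>F c. finite F \<and> F \<subseteq> J \<and> supnorm A (\<lambda>x. a * f x + b * g x - (\<Sum>i\<in>F. c i * d i x)) < e"
    if "e > 0" for e
  proof -
    define \<delta> where "\<delta> = e / (\<bar>a\<bar> + \<bar>b\<bar> + 1)"
    have pos: "\<bar>a\<bar> + \<bar>b\<bar> + 1 > 0" by (simp add: add_nonneg_pos)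
    then have "\<delta> > 0" using \<open>e > 0\<close> by (simp add: \<delta>_def)
    obtain F1 c1 where F1: "finite F1" "F1 \<subseteq> J" "\<And>x. x \<in> A \<Longrightarrow> \<bar>f x - (\<Sum>i\<in>F1. c1 i * d i x)\<bar> < \<delta>"
      using cspan_approx[OF f \<open>\<delta> > 0\<close>] by blast
    obtain F2 c2 where F2: "finite F2" "F2 \<subseteq> J" "\<And>x. x \<in> A \<Longrightarrow> \<bar>g x - (\<Sum>i\<in>F2. c2 i * d i x)\<bar> < \<delta>"
      using cspan_approx[OF g \<open>\<delta> > 0\<close>] by blast
    define c where "c i = a * (if i \<in> F1 then c1 i else 0) + b * (if i \<in> F2 then c2 i else 0)" for i
    have comb: "(\<Sum>i\<in>F1 \<union> F2. c i * d i x) = a * (\<Sum>i\<in>F1. c1 i * d i x) + b * (\<Sum>i\<in>F2. c2 i * d i x)" for x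
      unfolding c_def by (rule sum_merge_coeffs[OF F1(1) F2(1)])
    have "supnorm A (\<lambda>x. a * f x + b * g x - (\<Sum>i\<in>F1 \<union> F2. c i * d i x)) \<le> (\<bar>a\<bar> + \<bar>b\<bar>) * \<delta>"
    proof (rule supnorm_least[OF A_nonempty])
      fix x assume "x \<in> A"
      have "\<bar>a * f x + b * g x - (\<Sum>i\<in>F1 \<union> F2. c i * d i x)\<bar>
          = \<bar>a * (f x - (\<Sum>i\<in>F1. c1 i * d i x)) + b * (g x - (\<Sum>i\<in>F2. c2 i * d i x))\<bar>"
        by (simp add: comb algebra_simps)
      also have "\<dots> \<le> \<bar>a\<bar> * \<bar>f x - (\<Sum>i\<in>F1. c1 i * d i x)\<bar> + \<bar>b\<bar> * \<bar>g x - (\<Sum>i\<in>F2. c2 i * d i x)\<bar>"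
        using abs_triangle_ineq[of "a * (f x - (\<Sum>i\<in>F1. c1 i * d i x))" "b * (g x - (\<Sum>i\<in>F2. c2 i * d i x))"]
        by (simp add: abs_mult)
      also have "\<dots> \<le> \<bar>a\<bar> * \<delta> + \<bar>b\<bar> * \<delta>"
        using F1(3)[OF \<open>x \<in> A\<close>] F2(3)[OF \<open>x \<in> A\<close>]
        by (intro add_mono mult_left_mono) auto
      finally show "\<bar>a * f x + b * g x - (\<Sum>i\<in>F1 \<union> F2. c i * d i x)\<bar> \<le> (\<bar>a\<bar> + \<bar>b\<bar>) * \<delta>"
        by (simp add: distrib_right)
    qed
    also have "\<dots> < (\<bar>a\<bar> + \<bar>b\<bar> + 1) * \<delta>"
      using \<open>\<delta> > 0\<close> by (simp add: distrib_right)
    also have "\<dots> = e"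
      using pos by (simp add: \<delta>_def)
    finally show ?thesis using F1(1,2) F2(1,2) by (intro exI[of _ "F1 \<union> F2"] exI[of _ c]) auto
  qed
  moreover have "(\<lambda>x. a * f x + b * g x) \<in> linf A"
    using f g by (intro linf_lin) (auto simp: cspan_def)
  ultimately show ?thesis by (simp add: cspan_def)
qed

lemma cspan_add: "f \<in> cspan A J d \<Longrightarrow> g \<in> cspan A J d \<Longrightarrow> (\<lambda>x. f x + g x) \<in> cspan A J d"
  using cspan_lin[of f g 1 1] by simp

lemma cspan_diff: "f \<in> cspan A J d \<Longrightarrow> g \<in> cspan A J d \<Longrightarrow> (\<lambda>x. f x - g x) \<in> cspan A J d"
  using cspan_lin[of f g 1 "-1"] by simp

lemma cspan_closed:
  assumes f: "f \<in> linf A" and approx: "\<And>e. e > 0 \<Longrightarrow> \<exists>g\<in>cspan A J d. \<forall>x\<in>A. \<bar>f x - g x\<bar> < e"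
  shows "f \<in> cspan A J d"
proof -
  have "\<exists>F c. finite F \<and> F \<subseteq> J \<and> supnorm A (\<lambda>x. f x - (\<Sum>i\<in>F. c i * d i x)) < e"
    if "e > 0" for e
  proof -
    obtain g where g: "g \<in> cspan A J d" "\<And>x. x \<in> A \<Longrightarrow> \<bar>f x - g x\<bar> < e / 3"
      using approx[of "e / 3"] \<open>e > 0\<close> by auto
    obtain F c where F: "finite F" "F \<subseteq> J" "\<And>x. x \<in> A \<Longrightarrow> \<bar>g x - (\<Sum>i\<in>F. c i * d i x)\<bar> < e / 3"
      using cspan_approx[OF g(1)] \<open>e > 0\<close> by (metis zero_less_divide_iff zero_less_numeral)
    have "supnorm A (\<lambda>x. f x - (\<Sum>i\<in>F. c i * d i x)) \<le> 2 * e / 3"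
    proof (rule supnorm_least[OF A_nonempty])
      fix x assume "x \<in> A"
      then show "\<bar>f x - (\<Sum>i\<in>F. c i * d i x)\<bar> \<le> 2 * e / 3"
        using g(2)[of x] F(3)[of x] by linarith
    qed
    then show ?thesis using F(1,2) \<open>e > 0\<close> by (intro exI[of _ F] exI[of _ c]) auto
  qed
  with f show ?thesis by (simp add: cspan_def)
qed

lemma cspan_geometric_series:
  assumes u: "u \<in> cspan A J d" and V: "\<And>n. V n \<in> cspan A J d"
    and bound: "\<And>n x. x \<in> A \<Longrightarrow> \<bar>V n x\<bar> \<le> K * (1/2)^n"
  shows "(\<lambda>x. u x + (\<Sum>n. V n x)) \<in> cspan A J d"
proof (rule cspan_closed)
  have V_out: "V n x = 0" if "x \<notin> A" for n x
    using V cspan_linf linf_zero that by metis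
  have tail: "\<bar>\<Sum>n. V (n + N) x\<bar> \<le> 2 * K * (1/2)^N" for N x
  proof (cases "x \<in> A")
    case True
    then show ?thesis using geometric_tail_bound(2)[of "\<lambda>n. V n x"] bound by blast
  next
    case False
    then have "K \<ge> 0" using A_nonempty bound[of _ 0] by fastforce
    with False show ?thesis by (simp add: V_out)
  qed
  have partial: "(\<Sum>n. V n x) = (\<Sum>n. V (n + N) x) + (\<Sum>n<N. V n x)" for N x
  proof (cases "x \<in> A")
    case True
    then show ?thesis
      using bound by (intro suminf_split_initial_segment geometric_tail_bound(1)) blast
  qed (simp add: V_out)
  show "(\<lambda>x. u x + (\<Sum>n. V n x)) \<in> linf A"
  proof (rule linfI[of _ _ "supnorm A u + 2 * K"])
    fix x assume "x \<in> A"
    then show "\<bar>u x + (\<Sum>n. V n x)\<bar> \<le> supnorm A u + 2 * K"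
      using linf_abs_le[OF cspan_linf[OF u]] tail[of 0 x] by (fastforce simp: abs_le_iff)
  qed (simp add: V_out linf_zero[OF cspan_linf[OF u]])
  fix e :: real assume "e > 0"
  obtain N where N: "2 * K * (1/2)^N < e"
  proof (cases "K > 0")
    case True
    obtain N where "(1/2::real)^N < e / (2 * K)"
      using real_arch_pow_inv[of "e / (2 * K)" "1/2"] \<open>e > 0\<close> True by auto
    with True show ?thesis using that by (simp add: field_simps)
  next
    case False
    then show ?thesis using that[of 0] \<open>e > 0\<close> by simp
  qed
  have "(\<lambda>x. u x + (\<Sum>n<N. V n x)) \<in> cspan A J d"
  proof (induction N)
    case (Suc N)
    then show ?case using cspan_add[OF Suc V[of N]] by (simp add: add.assoc)
  qed (simp add: u)
  moreover have "\<bar>u x + (\<Sum>n. V n x) - (u x + (\<Sum>n<N. V n x))\<bar> < e" for x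
    using tail[of N x] partial[of x N] N by simp
  ultimately show "\<exists>g\<in>cspan A J d. \<forall>x\<in>A. \<bar>u x + (\<Sum>n. V n x) - g x\<bar> < e"
    by (intro bexI[where x = "\<lambda>x. u x + (\<Sum>n<N. V n x)"]) simp_all
qed

end

section \<open>Bourgain--Delbaen systems\<close>

lemma unitriangular_combination_zero:
  fixes M :: "'a \<Rightarrow> 'a \<Rightarrow> real" and r :: "'a \<Rightarrow> 'b::linorder"
  assumes "finite H"
    and diag: "\<And>x. x \<in> H \<Longrightarrow> M x x \<noteq> 0"
    and below: "\<And>x y. x \<in> H \<Longrightarrow> y \<in> H \<Longrightarrow> x \<noteq> y \<Longrightarrow> r y \<le> r x \<Longrightarrow> M x y = 0"
    and comb: "\<And>y. y \<in> H \<Longrightarrow> (\<Sum>x\<in>H. a x * M x y) = 0"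
    and "x \<in> H"
  shows "a x = 0"
proof (rule ccontr)
  assume "a x \<noteq> 0"
  define H0 where "H0 = {x \<in> H. a x \<noteq> 0}"
  have "finite H0" "H0 \<noteq> {}" using \<open>finite H\<close> \<open>x \<in> H\<close> \<open>a x \<noteq> 0\<close> by (auto simp: H0_def)
  then have "Min (r ` H0) \<in> r ` H0" by simp
  then obtain y where y: "y \<in> H0" "r y = Min (r ` H0)" by auto
  then have "y \<in> H" "a y \<noteq> 0" by (auto simp: H0_def)
  have "(\<Sum>x\<in>H. a x * M x y) = a y * M y y + (\<Sum>x\<in>H - {y}. a x * M x y)"
    using \<open>finite H\<close> \<open>y \<in> H\<close> by (simp add: sum.remove)
  also have "(\<Sum>x\<in>H - {y}. a x * M x y) = 0"
  proof (rule sum.neutral, rule ballI)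
    fix x assume x: "x \<in> H - {y}"
    show "a x * M x y = 0"
    proof (cases "a x = 0")
      case False
      then have "r y \<le> r x" using x y \<open>finite H0\<close> by (simp add: H0_def)
      then show ?thesis using below[of x y] x \<open>y \<in> H\<close> by simp
    qed simp
  qed
  finally have "(\<Sum>x\<in>H. a x * M x y) = a y * M y y" by simp
  then show False using comb[OF \<open>y \<in> H\<close>] diag[OF \<open>y \<in> H\<close>] \<open>a y \<noteq> 0\<close> by simp
qed

lemma unitv_linf: "\<gamma> \<in> A \<Longrightarrow> unitv \<gamma> \<in> linf A"
  by (rule linfI[of _ _ 1]) (auto simp: unitv_def)

lemma unitv_expansion:
  assumes "finite A" "x \<in> linf A"
  shows "x = (\<lambda>g. \<Sum>\<xi>\<in>A. x \<xi> * unitv \<xi> g)"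
proof
  fix g
  have "(\<Sum>\<xi>\<in>A. x \<xi> * unitv \<xi> g) = (\<Sum>\<xi>\<in>A. if \<xi> = g then x \<xi> else 0)"
    by (rule sum.cong) (auto simp: unitv_def)
  also have "\<dots> = x g"
    using assms by (simp add: sum.delta' linf_zero)
  finally show "x g = (\<Sum>\<xi>\<in>A. x \<xi> * unitv \<xi> g)" by simp
qed

locale bd_system =
  fixes G :: "nat \<Rightarrow> 'g set" and I :: "nat \<Rightarrow> ('g \<Rightarrow> real) \<Rightarrow> ('g \<Rightarrow> real)"
  assumes bd_data: "bd_data G I"
begin

abbreviation "\<Gamma> \<equiv> Gam G"
abbreviation "d \<equiv> bd_d G I"
abbreviation "lv \<equiv> lvl G"

lemma finite_G: "finite (G q)"
  using bd_data by (simp add: bd_data_def)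

lemma G_nonempty: "G q \<noteq> {}"
  using bd_data by (simp add: bd_data_def)

lemma G_strict_mono: "G q \<subset> G (Suc q)"
  using bd_data by (simp add: bd_data_def)

lemma G_mono: "p \<le> q \<Longrightarrow> G p \<subseteq> G q"
  by (rule lift_Suc_mono_le[of G]) (simp_all add: G_strict_mono less_imp_le)

lemma I_linf: "x \<in> linf (G q) \<Longrightarrow> I q x \<in> linf \<Gamma>"
  using bd_data by (simp add: bd_data_def)

lemma I_restr: "x \<in> linf (G q) \<Longrightarrow> restr (I q x) (G q) = x"
  using bd_data by (simp add: bd_data_def)

lemma I_linear:
  "x \<in> linf (G q) \<Longrightarrow> y \<in> linf (G q) \<Longrightarrow> I q (\<lambda>g. a * x g + b * y g) = (\<lambda>g. a * I q x g + b * I q y g)"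
  using bd_data by (simp add: bd_data_def)

lemma I_compat: "p < q \<Longrightarrow> x \<in> linf (G p) \<Longrightarrow> I q (restr (I p x) (G q)) = I p x"
  using bd_data by (simp add: bd_data_def)

lemma G_subset_Gam: "G q \<subseteq> \<Gamma>"
  by (auto simp: Gam_def)

lemma Gam_nonempty: "\<Gamma> \<noteq> {}"
  using G_nonempty G_subset_Gam by blast

lemma lvl_mem: "\<gamma> \<in> \<Gamma> \<Longrightarrow> \<gamma> \<in> G (lv \<gamma>)"
  unfolding lvl_def Gam_def by (auto intro: LeastI)

lemma lvl_le: "\<gamma> \<in> G q \<Longrightarrow> lv \<gamma> \<le> q"
  unfolding lvl_def by (rule Least_le)

lemma mem_G_iff_lvl_le: "\<gamma> \<in> \<Gamma> \<Longrightarrow> \<gamma> \<in> G q \<longleftrightarrow> lv \<gamma> \<le> q"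
  using lvl_le lvl_mem G_mono[of "lv \<gamma>" q] by auto

lemma lvl_eq_Suc: "\<gamma> \<in> G (Suc q) \<Longrightarrow> \<gamma> \<notin> G q \<Longrightarrow> lv \<gamma> = Suc q"
  using lvl_le[of \<gamma> "Suc q"] mem_G_iff_lvl_le[of \<gamma> q] G_subset_Gam[of "Suc q"] by auto

lemma finite_subset_G: "finite F \<Longrightarrow> F \<subseteq> \<Gamma> \<Longrightarrow> \<exists>q. F \<subseteq> G q"
proof (induction F rule: finite_induct)
  case (insert \<gamma> F)
  then obtain q where "F \<subseteq> G q" by auto
  moreover have "\<gamma> \<in> G (lv \<gamma>)" using insert.prems lvl_mem by blast
  ultimately have "insert \<gamma> F \<subseteq> G (max q (lv \<gamma>))"
    using G_mono[of q "max q (lv \<gamma>)"] G_mono[of "lv \<gamma>" "max q (lv \<gamma>)"] by auto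
  then show ?case by blast
qed simp

lemma I_eq_on_G: "x \<in> linf (G q) \<Longrightarrow> \<xi> \<in> G q \<Longrightarrow> I q x \<xi> = x \<xi>"
  using fun_cong[OF I_restr, of x q \<xi>] by (simp add: restr_def)

lemma I_zero: "I q (\<lambda>_. 0) = (\<lambda>_. 0)"
  using I_linear[OF linf_0 linf_0, of q 0 0] by simp

lemma I_add: "x \<in> linf (G q) \<Longrightarrow> y \<in> linf (G q) \<Longrightarrow> I q (\<lambda>g. x g + y g) = (\<lambda>g. I q x g + I q y g)"
  using I_linear[of x q y 1 1] by simp

lemma I_diff: "x \<in> linf (G q) \<Longrightarrow> y \<in> linf (G q) \<Longrightarrow> I q (\<lambda>g. x g - y g) = (\<lambda>g. I q x g - I q y g)"
  using I_linear[of x q y 1 "-1"] by simp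

lemma I_sum:
  "finite S \<Longrightarrow> (\<And>i. i \<in> S \<Longrightarrow> f i \<in> linf (G q)) \<Longrightarrow>
   I q (\<lambda>g. \<Sum>i\<in>S. c i * f i g) = (\<lambda>g. \<Sum>i\<in>S. c i * I q (f i) g)"
proof (induction S rule: finite_induct)
  case (insert i S)
  have "(\<lambda>g. \<Sum>j\<in>S. c j * f j g) \<in> linf (G q)" using insert by (intro linf_sum) auto
  then have "I q (\<lambda>g. c i * f i g + 1 * (\<Sum>j\<in>S. c j * f j g)) =
        (\<lambda>g. c i * I q (f i) g + 1 * I q (\<lambda>g. \<Sum>j\<in>S. c j * f j g) g)"
    using insert by (intro I_linear) auto
  with insert show ?case by simp
qed (simp add: I_zero)

definition I_bound :: real where
  "I_bound = max 1 (SOME C. \<forall>q. \<forall>x\<in>linf (G q). supnorm \<Gamma> (I q x) \<le> C * supnorm (G q) x)"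

lemma I_bound_ge_1: "I_bound \<ge> 1"
  by (simp add: I_bound_def)

lemma supnorm_I_le: "x \<in> linf (G q) \<Longrightarrow> supnorm \<Gamma> (I q x) \<le> I_bound * supnorm (G q) x"
proof -
  assume x: "x \<in> linf (G q)"
  define C where "C = (SOME C. \<forall>q. \<forall>x\<in>linf (G q). supnorm \<Gamma> (I q x) \<le> C * supnorm (G q) x)"
  have "\<exists>C. \<forall>q. \<forall>x\<in>linf (G q). supnorm \<Gamma> (I q x) \<le> C * supnorm (G q) x"
    using bd_data by (simp add: bd_data_def)
  then have "\<forall>q. \<forall>x\<in>linf (G q). supnorm \<Gamma> (I q x) \<le> C * supnorm (G q) x"
    unfolding C_def by (rule someI_ex)
  then have "supnorm \<Gamma> (I q x) \<le> C * supnorm (G q) x"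
    using x by blast
  also have "\<dots> \<le> I_bound * supnorm (G q) x"
    unfolding I_bound_def C_def[symmetric]
    by (rule mult_right_mono) (simp_all add: supnorm_nonneg[OF G_nonempty linf_bdd[OF x]])
  finally show ?thesis .
qed

lemma d_linf: "\<gamma> \<in> \<Gamma> \<Longrightarrow> d \<gamma> \<in> linf \<Gamma>"
  unfolding bd_d_def by (rule I_linf[OF unitv_linf[OF lvl_mem]])

lemma d_eq_unitv: "\<gamma> \<in> \<Gamma> \<Longrightarrow> \<xi> \<in> G (lv \<gamma>) \<Longrightarrow> d \<gamma> \<xi> = unitv \<gamma> \<xi>"
  unfolding bd_d_def by (rule I_eq_on_G[OF unitv_linf[OF lvl_mem]])

lemma d_self: "\<gamma> \<in> \<Gamma> \<Longrightarrow> d \<gamma> \<gamma> = 1"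
  using d_eq_unitv[OF _ lvl_mem] by (simp add: unitv_def)

lemma d_below: "\<gamma> \<in> \<Gamma> \<Longrightarrow> \<xi> \<in> \<Gamma> \<Longrightarrow> \<xi> \<noteq> \<gamma> \<Longrightarrow> lv \<xi> \<le> lv \<gamma> \<Longrightarrow> d \<gamma> \<xi> = 0"
  using d_eq_unitv[of \<gamma> \<xi>] mem_G_iff_lvl_le[of \<xi> "lv \<gamma>"] by (simp add: unitv_def)

definition dsum :: "'g set \<Rightarrow> ('g \<Rightarrow> real) \<Rightarrow> 'g \<Rightarrow> real" where
  "dsum F a = (\<lambda>g. \<Sum>\<xi>\<in>F. a \<xi> * d \<xi> g)"

lemma dsum_linf: "finite F \<Longrightarrow> F \<subseteq> \<Gamma> \<Longrightarrow> dsum F a \<in> linf \<Gamma>"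
  unfolding dsum_def by (rule linf_sum) (use d_linf in auto)

lemma dsum_union:
  assumes "finite A" "finite B" "A \<inter> B = {}"
  shows "(\<lambda>g. dsum A a g + dsum B b g) = dsum (A \<union> B) (\<lambda>\<xi>. if \<xi> \<in> A then a \<xi> else b \<xi>)"
proof
  fix g
  have "(\<Sum>\<xi>\<in>A \<union> B. (if \<xi> \<in> A then a \<xi> else b \<xi>) * d \<xi> g)
     = (\<Sum>\<xi>\<in>A. (if \<xi> \<in> A then a \<xi> else b \<xi>) * d \<xi> g) + (\<Sum>\<xi>\<in>B. (if \<xi> \<in> A then a \<xi> else b \<xi>) * d \<xi> g)"
    by (rule sum.union_disjoint[OF assms])
  also have "\<dots> = dsum A a g + dsum B b g"
    unfolding dsum_def using assms(3) by (intro arg_cong2[where f="(+)"] sum.cong) auto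
  finally show "dsum A a g + dsum B b g = dsum (A \<union> B) (\<lambda>\<xi>. if \<xi> \<in> A then a \<xi> else b \<xi>) g"
    by (simp add: dsum_def)
qed

lemma I_on_top_level:
  assumes N: "N \<subseteq> G q" "\<And>\<xi>. \<xi> \<in> N \<Longrightarrow> lv \<xi> = q" and x: "x \<in> linf N"
  shows "I q x = dsum N x"
proof -
  have "finite N" using N(1) finite_G finite_subset by blast
  have "I q x = I q (\<lambda>g. \<Sum>\<xi>\<in>N. x \<xi> * unitv \<xi> g)"
    using unitv_expansion[OF \<open>finite N\<close> x] by simp
  also have "\<dots> = (\<lambda>g. \<Sum>\<xi>\<in>N. x \<xi> * I q (unitv \<xi>) g)"
    using N(1) by (intro I_sum[OF \<open>finite N\<close>] unitv_linf) auto
  also have "\<dots> = dsum N x"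
    unfolding dsum_def bd_d_def using N(2) by simp
  finally show ?thesis .
qed

lemma I_Suc_split:
  assumes x: "x \<in> linf (G (Suc q))"
  shows "\<exists>w. I (Suc q) x = (\<lambda>g. I q (restr x (G q)) g + dsum (G (Suc q) - G q) w g)"
proof -
  have sub: "G q \<subseteq> G (Suc q)" by (simp add: G_mono)
  define x0 where "x0 = restr x (G q)"
  have x0: "x0 \<in> linf (G q)" unfolding x0_def by (rule linf_restr[OF x sub subset_refl])
  define v where "v = restr (I q x0) (G (Suc q))"
  have v: "v \<in> linf (G (Suc q))" unfolding v_def by (rule linf_restr[OF I_linf[OF x0] G_subset_Gam subset_refl])
  have Iv: "I (Suc q) v = I q x0" unfolding v_def by (rule I_compat) (use x0 in auto)
  define w where "w = (\<lambda>g. x g - v g)"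
  have "w \<in> linf (G (Suc q))" unfolding w_def by (rule linf_diff[OF x v])
  moreover have "w g = 0" if "g \<notin> G (Suc q) - G q" for g
  proof (cases "g \<in> G q")
    case True
    then show ?thesis
      using sub I_eq_on_G[OF x0 True] by (auto simp: w_def v_def x0_def restr_def)
  next
    case False
    then show ?thesis using that linf_zero[OF \<open>w \<in> _\<close>] by blast
  qed
  ultimately have w: "w \<in> linf (G (Suc q) - G q)"
    by (intro linfI[of _ _ "supnorm (G (Suc q)) w"]) (auto intro: linf_abs_le)
  have "I (Suc q) x = (\<lambda>g. I (Suc q) v g + I (Suc q) w g)"
    using I_add[OF v \<open>w \<in> linf (G (Suc q))\<close>] by (simp add: w_def)
  also have "I (Suc q) w = dsum (G (Suc q) - G q) w"
    using w by (intro I_on_top_level) (auto intro: lvl_eq_Suc)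
  finally have "I (Suc q) x = (\<lambda>g. I q x0 g + dsum (G (Suc q) - G q) w g)"
    using Iv by (simp add: add.commute)
  then show ?thesis unfolding x0_def by blast
qed

lemma I_in_dspan: "x \<in> linf (G q) \<Longrightarrow> \<exists>a. I q x = dsum (G q) a"
proof (induction q arbitrary: x)
  case 0
  have "I 0 x = dsum (G 0) x"
    using 0 lvl_le[of _ 0] by (intro I_on_top_level) auto
  then show ?case by blast
next
  case (Suc q)
  obtain w where w: "I (Suc q) x = (\<lambda>g. I q (restr x (G q)) g + dsum (G (Suc q) - G q) w g)"
    using I_Suc_split[OF Suc.prems] by blast
  obtain a where "I q (restr x (G q)) = dsum (G q) a"
    using Suc.IH[OF linf_restr[OF Suc.prems G_mono subset_refl]] by auto
  with w have "I (Suc q) x = dsum (G q \<union> (G (Suc q) - G q)) (\<lambda>\<xi>. if \<xi> \<in> G q then a \<xi> else w \<xi>)"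
    using dsum_union[of "G q" "G (Suc q) - G q" a w] finite_G by auto
  also have "G q \<union> (G (Suc q) - G q) = G (Suc q)" using G_mono[of q "Suc q"] by auto
  finally show ?case by blast
qed

lemma dsum_triangular_zero:
  assumes "finite H" "H \<subseteq> \<Gamma>" "\<And>\<zeta>. \<zeta> \<in> H \<Longrightarrow> dsum H a \<zeta> = 0" "\<eta> \<in> H"
  shows "a \<eta> = 0"
proof (rule unitriangular_combination_zero[where M = d and r = lv])
  show "\<And>\<xi> \<zeta>. \<xi> \<in> H \<Longrightarrow> \<zeta> \<in> H \<Longrightarrow> \<xi> \<noteq> \<zeta> \<Longrightarrow> lv \<zeta> \<le> lv \<xi> \<Longrightarrow> d \<xi> \<zeta> = 0"
    using d_below assms(2) by blast
  show "\<And>\<zeta>. \<zeta> \<in> H \<Longrightarrow> (\<Sum>\<xi>\<in>H. a \<xi> * d \<xi> \<zeta>) = 0"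
    using assms(3) by (simp add: dsum_def)
qed (use assms d_self in auto)

text \<open>The transposed system is triangular for the reversed order of levels.\<close>

lemma coeffs_triangular_zero:
  assumes "finite H" "H \<subseteq> \<Gamma>" "\<And>\<eta>. \<eta> \<in> H \<Longrightarrow> (\<Sum>\<xi>\<in>H. V \<xi> * d \<eta> \<xi>) = 0" "\<xi> \<in> H"
  shows "V \<xi> = 0"
proof (rule unitriangular_combination_zero[where M = "\<lambda>\<xi> \<eta>. d \<eta> \<xi>" and r = "\<lambda>\<xi>. - int (lv \<xi>)"])
  show "\<And>\<xi> \<eta>. \<xi> \<in> H \<Longrightarrow> \<eta> \<in> H \<Longrightarrow> \<xi> \<noteq> \<eta> \<Longrightarrow> - int (lv \<eta>) \<le> - int (lv \<xi>) \<Longrightarrow> d \<eta> \<xi> = 0"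
    using d_below assms(2) by auto
qed (use assms d_self in auto)

definition proj :: "nat \<Rightarrow> ('g \<Rightarrow> real) \<Rightarrow> 'g \<Rightarrow> real" where
  "proj q x = I q (restr x (G q))"

lemma restr_G_linf: "x \<in> linf \<Gamma> \<Longrightarrow> restr x (G q) \<in> linf (G q)"
  by (rule linf_restr[OF _ G_subset_Gam subset_refl])

lemma proj_linf: "x \<in> linf \<Gamma> \<Longrightarrow> proj q x \<in> linf \<Gamma>"
  unfolding proj_def by (rule I_linf[OF restr_G_linf])

lemma I_restr_d: "\<xi> \<in> G q \<Longrightarrow> I q (restr (d \<xi>) (G q)) = d \<xi>"
proof -
  assume "\<xi> \<in> G q"
  then have \<xi>: "\<xi> \<in> \<Gamma>" "lv \<xi> \<le> q" using G_subset_Gam lvl_le by auto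
  have u: "unitv \<xi> \<in> linf (G (lv \<xi>))" by (rule unitv_linf[OF lvl_mem[OF \<xi>(1)]])
  show ?thesis
  proof (cases "lv \<xi> = q")
    case True
    then show ?thesis using I_restr[OF u] by (simp add: bd_d_def)
  next
    case False
    then show ?thesis using I_compat[OF _ u, of q] \<xi>(2) by (simp add: bd_d_def)
  qed
qed

lemma proj_dsum: "finite F \<Longrightarrow> F \<subseteq> G q \<Longrightarrow> proj q (dsum F c) = dsum F c"
proof -
  assume F: "finite F" "F \<subseteq> G q"
  have "restr (dsum F c) (G q) = (\<lambda>g. \<Sum>\<xi>\<in>F. c \<xi> * restr (d \<xi>) (G q) g)"
    by (rule ext) (simp add: restr_def dsum_def)
  moreover have "I q (\<lambda>g. \<Sum>\<xi>\<in>F. c \<xi> * restr (d \<xi>) (G q) g) = (\<lambda>g. \<Sum>\<xi>\<in>F. c \<xi> * I q (restr (d \<xi>) (G q)) g)"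
    using F G_subset_Gam by (intro I_sum restr_G_linf d_linf) auto
  ultimately have "proj q (dsum F c) = (\<lambda>g. \<Sum>\<xi>\<in>F. c \<xi> * I q (restr (d \<xi>) (G q)) g)"
    by (simp add: proj_def)
  also have "\<dots> = dsum F c"
    using F I_restr_d by (simp add: dsum_def subset_iff)
  finally show ?thesis .
qed

lemma proj_diff: "x \<in> linf \<Gamma> \<Longrightarrow> y \<in> linf \<Gamma> \<Longrightarrow> proj q (\<lambda>g. x g - y g) = (\<lambda>g. proj q x g - proj q y g)"
proof -
  assume x: "x \<in> linf \<Gamma>" and y: "y \<in> linf \<Gamma>"
  have "restr (\<lambda>g. x g - y g) (G q) = (\<lambda>g. restr x (G q) g - restr y (G q) g)"
    by (rule ext) (simp add: restr_def)
  then show ?thesis unfolding proj_def using I_diff[OF restr_G_linf[OF x] restr_G_linf[OF y]] by simp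
qed

lemma supnorm_proj_le: "x \<in> linf \<Gamma> \<Longrightarrow> supnorm \<Gamma> (proj q x) \<le> I_bound * supnorm \<Gamma> x"
proof -
  assume x: "x \<in> linf \<Gamma>"
  have "supnorm \<Gamma> (proj q x) \<le> I_bound * supnorm (G q) (restr x (G q))"
    unfolding proj_def by (rule supnorm_I_le[OF restr_G_linf[OF x]])
  also have "supnorm (G q) (restr x (G q)) = supnorm (G q) x"
    by (rule supnorm_cong) (simp add: restr_def)
  also have "I_bound * supnorm (G q) x \<le> I_bound * supnorm \<Gamma> x"
    using I_bound_ge_1 supnorm_subset[OF G_subset_Gam G_nonempty linf_bdd[OF x]] by simp
  finally show ?thesis .
qed

abbreviation X :: "('g \<Rightarrow> real) set" where
  "X \<equiv> bd_space G I"

lemma X_linf: "x \<in> X \<Longrightarrow> x \<in> linf \<Gamma>"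
  unfolding bd_space_def by (rule cspan_linf)

text \<open>The projections are uniformly bounded and fix the dense span, hence converge on the closure.\<close>

lemma proj_converges:
  assumes x: "x \<in> X" and "e > 0"
  shows "\<exists>q. \<forall>g\<in>\<Gamma>. \<bar>x g - proj q x g\<bar> < e"
proof -
  define \<delta> where "\<delta> = e / (1 + I_bound)"
  have "\<delta> > 0" using \<open>e > 0\<close> I_bound_ge_1 by (simp add: \<delta>_def)
  obtain F c where F: "finite F" "F \<subseteq> \<Gamma>" and approx: "\<And>g. g \<in> \<Gamma> \<Longrightarrow> \<bar>x g - dsum F c g\<bar> < \<delta>"
    using cspan_approx[OF Gam_nonempty d_linf x[unfolded bd_space_def] \<open>\<delta> > 0\<close>]
    unfolding dsum_def by blast
  obtain q where q: "F \<subseteq> G q" using finite_subset_G[OF F] by blast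
  have xl: "x \<in> linf \<Gamma>" by (rule X_linf[OF x])
  have zl: "dsum F c \<in> linf \<Gamma>" by (rule dsum_linf[OF F])
  have "supnorm \<Gamma> (\<lambda>g. dsum F c g - x g) \<le> \<delta>"
    using approx by (intro supnorm_least[OF Gam_nonempty]) (simp add: abs_minus_commute less_imp_le)
  then have small: "supnorm \<Gamma> (proj q (\<lambda>g. dsum F c g - x g)) \<le> I_bound * \<delta>"
    using supnorm_proj_le[OF linf_diff[OF zl xl], of q] I_bound_ge_1 by (smt (verit) mult_left_mono)
  have "\<bar>x g - proj q x g\<bar> < e" if g: "g \<in> \<Gamma>" for g
  proof -
    have "x g - proj q x g = (x g - dsum F c g) + proj q (\<lambda>g. dsum F c g - x g) g"
      using proj_diff[OF zl xl, of q] proj_dsum[OF F(1) q] by simp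
    moreover have "\<bar>proj q (\<lambda>g. dsum F c g - x g) g\<bar> \<le> I_bound * \<delta>"
      using linf_abs_le[OF proj_linf[where q = q, OF linf_diff[OF zl xl]] g] small by linarith
    moreover have "(1 + I_bound) * \<delta> = e" using I_bound_ge_1 by (simp add: \<delta>_def)
    ultimately show ?thesis using approx[OF g] by (simp add: algebra_simps)
  qed
  then show ?thesis by blast
qed

end

section \<open>Self-determined subsets\<close>

locale bd_self_determined = bd_system G I
  for G :: "nat \<Rightarrow> 'g set" and I :: "nat \<Rightarrow> ('g \<Rightarrow> real) \<Rightarrow> ('g \<Rightarrow> real)" +
  fixes \<Gamma>' :: "'g set"
  assumes self_determined: "self_determined G I \<Gamma>'"
begin

lemma infinite_\<Gamma>': "infinite \<Gamma>'"
  using self_determined by (simp add: self_determined_def)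

lemma \<Gamma>'_subset: "\<Gamma>' \<subseteq> \<Gamma>"
  using self_determined by (simp add: self_determined_def)

lemma \<Gamma>'_nonempty: "\<Gamma>' \<noteq> {}"
  using infinite_\<Gamma>' by auto

lemma biorthogonal_functional:
  "\<gamma> \<in> \<Gamma>' \<Longrightarrow> \<exists>F c. finite F \<and> F \<subseteq> \<Gamma>' \<and> (\<forall>\<eta>\<in>\<Gamma>. (\<Sum>\<zeta>\<in>F. c \<zeta> * d \<eta> \<zeta>) = (if \<eta> = \<gamma> then 1 else 0))"
  using self_determined by (simp add: self_determined_def)

lemma biorthogonal_combination:
  assumes "finite S" "S \<subseteq> \<Gamma>'"
  shows "\<exists>H W. finite H \<and> H \<subseteq> \<Gamma>' \<and> (\<forall>e\<in>\<Gamma>. (\<Sum>\<xi>\<in>H. W \<xi> * d e \<xi>) = (if e \<in> S then \<beta> e else 0))"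
  using assms
proof (induction S rule: finite_induct)
  case empty
  show ?case by (intro exI[of _ "{}"]) simp
next
  case (insert \<gamma> S)
  then obtain H W where H: "finite H" "H \<subseteq> \<Gamma>'"
    and W: "\<And>e. e \<in> \<Gamma> \<Longrightarrow> (\<Sum>\<xi>\<in>H. W \<xi> * d e \<xi>) = (if e \<in> S then \<beta> e else 0)"
    by blast
  obtain F c where F: "finite F" "F \<subseteq> \<Gamma>'"
    and c: "\<And>e. e \<in> \<Gamma> \<Longrightarrow> (\<Sum>\<xi>\<in>F. c \<xi> * d e \<xi>) = (if e = \<gamma> then 1 else 0)"
    using biorthogonal_functional[of \<gamma>] insert.prems by blast
  define W' where "W' \<xi> = 1 * (if \<xi> \<in> H then W \<xi> else 0) + \<beta> \<gamma> * (if \<xi> \<in> F then c \<xi> else 0)" for \<xi>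
  have "(\<Sum>\<xi>\<in>H \<union> F. W' \<xi> * d e \<xi>) = (if e \<in> insert \<gamma> S then \<beta> e else 0)" if "e \<in> \<Gamma>" for e
    using sum_merge_coeffs[OF H(1) F(1), of 1 W "\<beta> \<gamma>" c "\<lambda>\<xi>. d e \<xi>"] W[OF that] c[OF that] insert.hyps(2)
    by (auto simp: W'_def)
  then show ?case using H F by (intro exI[of _ "H \<union> F"] exI[of _ W']) auto
qed

text \<open>The functional \<open>\<Sum> d\<^sub>\<gamma>(\<zeta>) d\<^sub>\<gamma>\<^sup>* - e\<^sub>\<zeta>\<^sup>*\<close>, summed over the \<open>\<gamma> \<in> \<Gamma>'\<close> of level at most
  that of \<open>\<zeta>\<close>, is a combination \<open>\<Sum> V\<^sub>\<xi> e\<^sub>\<xi>\<^sup>*\<close> of coordinates in \<open>\<Gamma>'\<close> that vanishes on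
  every \<open>d\<^sub>e\<close> with \<open>e \<in> \<Gamma>'\<close>.  Triangularity forces \<open>V = 0\<close>, and evaluating at \<open>d\<^sub>\<eta>\<close>
  gives \<open>d\<^sub>\<eta>(\<zeta>) = 0\<close>.\<close>

lemma d_vanishes_on_\<Gamma>':
  assumes \<eta>: "\<eta> \<in> \<Gamma>" "\<eta> \<notin> \<Gamma>'" and \<zeta>: "\<zeta> \<in> \<Gamma>'"
  shows "d \<eta> \<zeta> = 0"
proof -
  have \<zeta>\<Gamma>: "\<zeta> \<in> \<Gamma>" using \<zeta> \<Gamma>'_subset by blast
  define S where "S = \<Gamma>' \<inter> G (lv \<zeta>)"
  have "finite S" "S \<subseteq> \<Gamma>'" using finite_G by (auto simp: S_def)
  then obtain H0 W where H0: "finite H0" "H0 \<subseteq> \<Gamma>'"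
    and W: "\<And>e. e \<in> \<Gamma> \<Longrightarrow> (\<Sum>\<xi>\<in>H0. W \<xi> * d e \<xi>) = (if e \<in> S then d e \<zeta> else 0)"
    using biorthogonal_combination[of S "\<lambda>e. d e \<zeta>"] by blast
  define H where "H = insert \<zeta> H0"
  have H: "finite H" "H \<subseteq> \<Gamma>" "\<zeta> \<in> H" "H0 \<subseteq> H"
    using H0 \<zeta> \<Gamma>'_subset by (auto simp: H_def)
  define V where "V \<xi> = (if \<xi> \<in> H0 then W \<xi> else 0) - unitv \<zeta> \<xi>" for \<xi>
  have V_eval: "(\<Sum>\<xi>\<in>H. V \<xi> * d e \<xi>) = (if e \<in> S then d e \<zeta> else 0) - d e \<zeta>" if "e \<in> \<Gamma>" for e
  proof -
    have "(\<Sum>\<xi>\<in>H. unitv \<zeta> \<xi> * d e \<xi>) = (\<Sum>\<xi>\<in>H. if \<xi> = \<zeta> then d e \<xi> else 0)"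
      by (rule sum.cong) (simp_all add: unitv_def)
    also have "\<dots> = d e \<zeta>" using H by (simp add: sum.delta')
    finally show ?thesis
      using sum_restrict_coeffs[OF H(1,4), of W "\<lambda>\<xi>. d e \<xi>"] W[OF that]
      by (simp add: V_def left_diff_distrib sum_subtractf)
  qed
  have "V \<xi> = 0" if "\<xi> \<in> H" for \<xi>
  proof (rule coeffs_triangular_zero[OF H(1,2) _ that])
    fix e assume "e \<in> H"
    then have e: "e \<in> \<Gamma>'" "e \<in> \<Gamma>" using H0(2) \<zeta> \<Gamma>'_subset by (auto simp: H_def)
    have "d e \<zeta> = 0" if "e \<notin> S"
    proof -
      have "\<not> lv e \<le> lv \<zeta>" using that e mem_G_iff_lvl_le by (simp add: S_def)
      then show ?thesis using d_below[OF e(2) \<zeta>\<Gamma>] by force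
    qed
    then show "(\<Sum>\<xi>\<in>H. V \<xi> * d e \<xi>) = 0" using V_eval[OF e(2)] by auto
  qed
  then have "(\<Sum>\<xi>\<in>H. V \<xi> * d \<eta> \<xi>) = 0" by simp
  moreover have "\<eta> \<notin> S" using \<eta> by (simp add: S_def)
  ultimately show ?thesis using V_eval[OF \<eta>(1)] by simp
qed

lemma dsum_vanishes_on_\<Gamma>': "F \<subseteq> \<Gamma> - \<Gamma>' \<Longrightarrow> \<zeta> \<in> \<Gamma>' \<Longrightarrow> dsum F a \<zeta> = 0"
  unfolding dsum_def by (rule sum.neutral) (auto simp: d_vanishes_on_\<Gamma>')

lemma dsum_split: "finite A \<Longrightarrow> B \<subseteq> A \<Longrightarrow> dsum A a = (\<lambda>g. dsum B a g + dsum (A - B) a g)"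
  unfolding dsum_def by (simp add: sum.subset_diff add.commute)

lemma I_in_dspan_outside_\<Gamma>':
  assumes z: "z \<in> linf (G q)" and z0: "\<And>\<zeta>. \<zeta> \<in> \<Gamma>' \<Longrightarrow> z \<zeta> = 0"
  shows "\<exists>a. I q z = dsum (G q - \<Gamma>') a"
proof -
  obtain a where a: "I q z = dsum (G q) a" using I_in_dspan[OF z] by blast
  define H where "H = G q \<inter> \<Gamma>'"
  have H: "finite H" "H \<subseteq> \<Gamma>" using finite_G G_subset_Gam by (auto simp: H_def)
  have split: "dsum (G q) a = (\<lambda>g. dsum H a g + dsum (G q - \<Gamma>') a g)"
    using dsum_split[OF finite_G, of H] by (simp add: H_def Diff_Int)
  have "dsum H a \<zeta> = 0" if "\<zeta> \<in> H" for \<zeta>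
  proof -
    have "dsum (G q - \<Gamma>') a \<zeta> = 0"
      using that G_subset_Gam by (intro dsum_vanishes_on_\<Gamma>') (auto simp: H_def)
    moreover have "dsum (G q) a \<zeta> = 0"
      using a I_eq_on_G[OF z] z0 that by (auto simp: H_def)
    ultimately show ?thesis using split by (metis add.right_neutral)
  qed
  then have "a \<eta> = 0" if "\<eta> \<in> H" for \<eta>
    using dsum_triangular_zero[OF H] that by blast
  then have "dsum H a = (\<lambda>_. 0)"
    by (simp add: dsum_def fun_eq_iff)
  then show ?thesis using a split by auto
qed

lemma proj_split:
  assumes x: "x \<in> linf \<Gamma>"
  shows "\<exists>a. proj q x = (\<lambda>g. I q (restr x (\<Gamma>' \<inter> G q)) g + dsum (G q - \<Gamma>') a g)"
proof -
  have x1: "restr x (\<Gamma>' \<inter> G q) \<in> linf (G q)"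
    using G_subset_Gam by (intro linf_restr[OF x]) auto
  have x2: "restr x (G q - \<Gamma>') \<in> linf (G q)"
    using G_subset_Gam by (intro linf_restr[OF x]) auto
  obtain a where a: "I q (restr x (G q - \<Gamma>')) = dsum (G q - \<Gamma>') a"
    using I_in_dspan_outside_\<Gamma>'[OF x2] by (auto simp: restr_def)
  have "restr x (G q) = (\<lambda>g. restr x (\<Gamma>' \<inter> G q) g + restr x (G q - \<Gamma>') g)"
    by (auto simp: restr_def)
  then have "proj q x = (\<lambda>g. I q (restr x (\<Gamma>' \<inter> G q)) g + I q (restr x (G q - \<Gamma>')) g)"
    unfolding proj_def using I_add[OF x1 x2] by simp
  then show ?thesis using a by auto
qed

lemma supnorm_I_restr_\<Gamma>'_le:
  assumes x: "x \<in> linf \<Gamma>"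
  shows "supnorm \<Gamma> (I q (restr x (\<Gamma>' \<inter> G q))) \<le> I_bound * supnorm \<Gamma>' (restr x \<Gamma>')"
proof -
  have x1: "restr x (\<Gamma>' \<inter> G q) \<in> linf (G q)"
    using G_subset_Gam by (intro linf_restr[OF x]) auto
  have R: "restr x \<Gamma>' \<in> linf \<Gamma>'" by (rule linf_restr[OF x \<Gamma>'_subset subset_refl])
  have "supnorm (G q) (restr x (\<Gamma>' \<inter> G q)) \<le> supnorm \<Gamma>' (restr x \<Gamma>')"
  proof (rule supnorm_least[OF G_nonempty])
    fix g assume "g \<in> G q"
    show "\<bar>restr x (\<Gamma>' \<inter> G q) g\<bar> \<le> supnorm \<Gamma>' (restr x \<Gamma>')"
      using linf_abs_le[OF R, of g] supnorm_nonneg[OF \<Gamma>'_nonempty linf_bdd[OF R]] \<open>g \<in> G q\<close>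
      by (auto simp: restr_def)
  qed
  then show ?thesis
    using supnorm_I_le[OF x1] I_bound_ge_1 by (smt (verit) mult_left_mono)
qed

abbreviation Y :: "('g \<Rightarrow> real) set" where
  "Y \<equiv> cspan \<Gamma> (\<Gamma> - \<Gamma>') d"

lemma d_linf_outside_\<Gamma>': "i \<in> \<Gamma> - \<Gamma>' \<Longrightarrow> d i \<in> linf \<Gamma>"
  by (simp add: d_linf)

lemma Y_subset_X: "Y \<subseteq> X"
  unfolding bd_space_def by (rule cspan_mono) blast

lemma Y_vanishes_on_\<Gamma>':
  assumes y: "y \<in> Y" and \<zeta>: "\<zeta> \<in> \<Gamma>'"
  shows "y \<zeta> = 0"
proof (rule ccontr)
  assume "y \<zeta> \<noteq> 0"
  then obtain F c where F: "finite F" "F \<subseteq> \<Gamma> - \<Gamma>'"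
    and approx: "\<And>g. g \<in> \<Gamma> \<Longrightarrow> \<bar>y g - (\<Sum>i\<in>F. c i * d i g)\<bar> < \<bar>y \<zeta>\<bar>"
    using cspan_approx[OF Gam_nonempty d_linf_outside_\<Gamma>' y, of "\<bar>y \<zeta>\<bar>"] by auto
  have "(\<Sum>i\<in>F. c i * d i \<zeta>) = 0"
    using dsum_vanishes_on_\<Gamma>'[OF F(2) \<zeta>] by (simp add: dsum_def)
  then show False using approx[of \<zeta>] \<zeta> \<Gamma>'_subset by auto
qed

lemma approx_by_Y:
  assumes x: "x \<in> X" and "e > 0"
  shows "\<exists>y\<in>Y. \<forall>g\<in>\<Gamma>. \<bar>x g - y g\<bar> < e + I_bound * supnorm \<Gamma>' (restr x \<Gamma>')"
proof -
  have xl: "x \<in> linf \<Gamma>" by (rule X_linf[OF x])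
  obtain q where q: "\<And>g. g \<in> \<Gamma> \<Longrightarrow> \<bar>x g - proj q x g\<bar> < e"
    using proj_converges[OF x \<open>e > 0\<close>] by blast
  define u where "u = I q (restr x (\<Gamma>' \<inter> G q))"
  obtain a where a: "proj q x = (\<lambda>g. u g + dsum (G q - \<Gamma>') a g)"
    using proj_split[OF xl] unfolding u_def by blast
  have "dsum (G q - \<Gamma>') a \<in> Y"
    unfolding dsum_def using G_subset_Gam finite_G
    by (intro sum_in_cspan[OF Gam_nonempty d_linf_outside_\<Gamma>']) auto
  moreover have "\<bar>x g - dsum (G q - \<Gamma>') a g\<bar> < e + I_bound * supnorm \<Gamma>' (restr x \<Gamma>')" if "g \<in> \<Gamma>" for g
  proof -
    have ul: "u \<in> linf \<Gamma>" unfolding u_def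
      using G_subset_Gam by (intro I_linf linf_restr[OF xl]) auto
    have "\<bar>u g\<bar> \<le> I_bound * supnorm \<Gamma>' (restr x \<Gamma>')"
      using linf_abs_le[OF ul that] supnorm_I_restr_\<Gamma>'_le[OF xl, of q] by (simp add: u_def)
    moreover have "x g - dsum (G q - \<Gamma>') a g = (x g - proj q x g) + u g" using a by simp
    ultimately show ?thesis using q[OF that] by linarith
  qed
  ultimately show ?thesis by blast
qed

lemma mem_Y_if_supnorm_restr_zero:
  assumes x: "x \<in> X" and "supnorm \<Gamma>' (restr x \<Gamma>') = 0"
  shows "x \<in> Y"
  using approx_by_Y[OF x] assms(2)
  by (intro cspan_closed[OF Gam_nonempty d_linf_outside_\<Gamma>' X_linf[OF x]]) auto

lemma kernel_restr_eq_Y: "{x \<in> X. restr x \<Gamma>' = (\<lambda>_. 0)} = Y"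
proof
  show "{x \<in> X. restr x \<Gamma>' = (\<lambda>_. 0)} \<subseteq> Y"
    using mem_Y_if_supnorm_restr_zero supnorm_zero[OF \<Gamma>'_nonempty] by auto
  show "Y \<subseteq> {x \<in> X. restr x \<Gamma>' = (\<lambda>_. 0)}"
    using Y_subset_X Y_vanishes_on_\<Gamma>' by (auto simp: restr_def fun_eq_iff)
qed

lemma quotient_estimate:
  "\<exists>C>0. \<forall>x\<in>X. \<exists>y\<in>Y. supnorm \<Gamma> (\<lambda>g. x g - y g) \<le> C * supnorm \<Gamma>' (restr x \<Gamma>')"
proof (intro exI[of _ "1 + I_bound"] conjI ballI)
  show "1 + I_bound > 0" using I_bound_ge_1 by simp
  fix x assume x: "x \<in> X"
  define s where "s = supnorm \<Gamma>' (restr x \<Gamma>')"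
  have "s \<ge> 0" unfolding s_def
    using X_linf[OF x] \<Gamma>'_subset
    by (intro supnorm_nonneg[OF \<Gamma>'_nonempty] linf_bdd linf_restr) auto
  show "\<exists>y\<in>Y. supnorm \<Gamma> (\<lambda>g. x g - y g) \<le> (1 + I_bound) * s"
  proof (cases "s = 0")
    case True
    then have "x \<in> Y" using mem_Y_if_supnorm_restr_zero[OF x] by (simp add: s_def)
    moreover have "supnorm \<Gamma> (\<lambda>g. x g - x g) = 0" by (simp add: supnorm_zero[OF Gam_nonempty])
    ultimately show ?thesis using True by force
  next
    case False
    then obtain y where "y \<in> Y" "\<And>g. g \<in> \<Gamma> \<Longrightarrow> \<bar>x g - y g\<bar> < s + I_bound * s"
      using approx_by_Y[OF x, of s] \<open>s \<ge> 0\<close> by (auto simp: s_def)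
    then show ?thesis
      by (intro bexI[of _ y] supnorm_least[OF Gam_nonempty]) (auto simp: algebra_simps less_imp_le)
  qed
qed

end

section \<open>The restricted system\<close>

context bd_self_determined
begin

abbreviation "L \<equiv> sd_levels G \<Gamma>'"
abbreviation "G' \<equiv> sub_G G \<Gamma>'"
abbreviation "I' \<equiv> sub_I G I \<Gamma>'"

lemma lvl_mem_Delta:
  assumes "\<gamma> \<in> \<Gamma>"
  shows "\<gamma> \<in> Delta G (lv \<gamma>)"
proof (cases "lv \<gamma>")
  case 0
  then show ?thesis using lvl_mem[OF assms] by simp
next
  case (Suc p)
  then have "\<gamma> \<in> G (Suc p)" using lvl_mem[OF assms] by simp
  then show ?thesis using mem_G_iff_lvl_le[OF assms, of p] Suc by simp
qed

lemma lvl_mem_sd_levels: "\<gamma> \<in> \<Gamma>' \<Longrightarrow> lv \<gamma> \<in> L"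
  unfolding sd_levels_def using lvl_mem_Delta \<Gamma>'_subset by blast

lemma infinite_sd_levels: "infinite L"
proof
  assume "finite L"
  then have "finite (\<Union>q\<in>L. G q)" using finite_G by blast
  moreover have "\<Gamma>' \<subseteq> (\<Union>q\<in>L. G q)"
    using lvl_mem lvl_mem_sd_levels \<Gamma>'_subset by blast
  ultimately show False using infinite_\<Gamma>' finite_subset by blast
qed

lemma sub_G_level:
  assumes "\<gamma> \<in> \<Gamma>'"
  obtains s where "enumerate L s = lv \<gamma>" "lvl G' \<gamma> = s" "\<gamma> \<in> G' s"
proof -
  obtain s where s: "enumerate L s = lv \<gamma>"
    using enumerate_Ex[OF infinite_sd_levels lvl_mem_sd_levels[OF assms]] by blast
  have mem: "\<gamma> \<in> G' s" using assms lvl_mem \<Gamma>'_subset s by (auto simp: sub_G_def)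
  have "lvl G' \<gamma> = s" unfolding lvl_def
  proof (rule Least_equality)
    show "\<gamma> \<in> G' s" by (rule mem)
    fix t assume "\<gamma> \<in> G' t"
    then have "lv \<gamma> \<le> enumerate L t" by (simp add: sub_G_def lvl_le)
    then have "enumerate L s \<le> enumerate L t" using s by simp
    then show "s \<le> t" using infinite_sd_levels by simp
  qed
  with s mem show ?thesis using that by blast
qed

lemma Gam_sub_G: "Gam G' = \<Gamma>'"
proof
  show "Gam G' \<subseteq> \<Gamma>'" by (auto simp: Gam_def sub_G_def)
  show "\<Gamma>' \<subseteq> Gam G'" by (auto simp: Gam_def elim: sub_G_level)
qed

lemma bd_d_sub: "\<gamma> \<in> \<Gamma>' \<Longrightarrow> bd_d G' I' \<gamma> = restr (d \<gamma>) \<Gamma>'"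
  by (erule sub_G_level) (simp add: bd_d_def sub_I_def)

lemma sub_combination_eq_restr:
  assumes "F \<subseteq> \<Gamma>'"
  shows "(\<lambda>g. \<Sum>\<xi>\<in>F. c \<xi> * bd_d G' I' \<xi> g) = restr (dsum F c) \<Gamma>'"
proof
  fix g
  have "(\<Sum>\<xi>\<in>F. c \<xi> * bd_d G' I' \<xi> g) = (\<Sum>\<xi>\<in>F. c \<xi> * restr (d \<xi>) \<Gamma>' g)"
    using assms by (intro sum.cong) (auto simp: bd_d_sub)
  then show "(\<Sum>\<xi>\<in>F. c \<xi> * bd_d G' I' \<xi> g) = restr (dsum F c) \<Gamma>' g"
    by (simp add: restr_def dsum_def)
qed

lemma bd_d_sub_linf: "\<gamma> \<in> \<Gamma>' \<Longrightarrow> bd_d G' I' \<gamma> \<in> linf \<Gamma>'"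
  using bd_d_sub d_linf \<Gamma>'_subset by (auto intro: linf_restr)

lemma bd_space_sub: "bd_space G' I' = cspan \<Gamma>' \<Gamma>' (bd_d G' I')"
  by (simp add: bd_space_def Gam_sub_G)

lemma restr_in_bd_space_sub:
  assumes x: "x \<in> X"
  shows "restr x \<Gamma>' \<in> bd_space G' I'"
  unfolding bd_space_sub
proof (rule cspan_closed[OF \<Gamma>'_nonempty bd_d_sub_linf])
  show "restr x \<Gamma>' \<in> linf \<Gamma>'" by (rule linf_restr[OF X_linf[OF x] \<Gamma>'_subset subset_refl])
  fix e :: real assume "e > 0"
  obtain F c where F: "finite F" "F \<subseteq> \<Gamma>" and approx: "\<And>g. g \<in> \<Gamma> \<Longrightarrow> \<bar>x g - dsum F c g\<bar> < e"
    using cspan_approx[OF Gam_nonempty d_linf x[unfolded bd_space_def] \<open>e > 0\<close>]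
    unfolding dsum_def by blast
  have "(\<lambda>g. \<Sum>\<xi>\<in>F \<inter> \<Gamma>'. c \<xi> * bd_d G' I' \<xi> g) \<in> cspan \<Gamma>' \<Gamma>' (bd_d G' I')"
    using F(1) by (intro sum_in_cspan[OF \<Gamma>'_nonempty bd_d_sub_linf]) auto
  then have "restr (dsum (F \<inter> \<Gamma>') c) \<Gamma>' \<in> cspan \<Gamma>' \<Gamma>' (bd_d G' I')"
    by (simp add: sub_combination_eq_restr)
  moreover have "\<bar>restr x \<Gamma>' g - restr (dsum (F \<inter> \<Gamma>') c) \<Gamma>' g\<bar> < e" if "g \<in> \<Gamma>'" for g
  proof -
    have "dsum F c g = dsum (F \<inter> \<Gamma>') c g + dsum (F - \<Gamma>') c g"
      using dsum_split[OF F(1), of "F \<inter> \<Gamma>'"] by (simp add: Diff_Int_distrib2 Diff_Int)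
    also have "dsum (F - \<Gamma>') c g = 0" using F(2) that by (intro dsum_vanishes_on_\<Gamma>') auto
    finally show ?thesis using approx[of g] that \<Gamma>'_subset by (auto simp: restr_def)
  qed
  ultimately show "\<exists>y\<in>cspan \<Gamma>' \<Gamma>' (bd_d G' I'). \<forall>g\<in>\<Gamma>'. \<bar>restr x \<Gamma>' g - y g\<bar> < e" by blast
qed

lemma bd_space_sub_approx_by_X:
  assumes x': "x' \<in> bd_space G' I'" and "e > 0"
  shows "\<exists>w\<in>X. \<forall>g\<in>\<Gamma>'. \<bar>x' g - w g\<bar> < e"
proof -
  obtain F c where F: "finite F" "F \<subseteq> \<Gamma>'"
    and approx: "\<And>g. g \<in> \<Gamma>' \<Longrightarrow> \<bar>x' g - (\<Sum>\<xi>\<in>F. c \<xi> * bd_d G' I' \<xi> g)\<bar> < e"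
    using cspan_approx[OF \<Gamma>'_nonempty bd_d_sub_linf x'[unfolded bd_space_sub] \<open>e > 0\<close>] by blast
  have "dsum F c \<in> X"
    unfolding bd_space_def dsum_def using F \<Gamma>'_subset
    by (intro sum_in_cspan[OF Gam_nonempty d_linf]) auto
  moreover have "\<bar>x' g - dsum F c g\<bar> < e" if "g \<in> \<Gamma>'" for g
    using approx[OF that] sub_combination_eq_restr[OF F(2), of c] that
    by (simp add: restr_def fun_eq_iff)
  ultimately show ?thesis by blast
qed

text \<open>Subtracting from \<open>w\<close> a near-best approximation in the kernel \<open>Y\<close> keeps the values on \<open>\<Gamma>'\<close>.\<close>

lemma bounded_lifting:
  obtains C where "C > 0"
    "\<And>w. w \<in> X \<Longrightarrow> \<exists>v\<in>X. (\<forall>g\<in>\<Gamma>'. v g = w g) \<and> (\<forall>g\<in>\<Gamma>. \<bar>v g\<bar> \<le> C * supnorm \<Gamma>' (restr w \<Gamma>'))"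
proof -
  obtain C where "C > 0"
    and C: "\<And>w. w \<in> X \<Longrightarrow> \<exists>y\<in>Y. supnorm \<Gamma> (\<lambda>g. w g - y g) \<le> C * supnorm \<Gamma>' (restr w \<Gamma>')"
    using quotient_estimate by blast
  have "\<exists>v\<in>X. (\<forall>g\<in>\<Gamma>'. v g = w g) \<and> (\<forall>g\<in>\<Gamma>. \<bar>v g\<bar> \<le> C * supnorm \<Gamma>' (restr w \<Gamma>'))"
    if w: "w \<in> X" for w
  proof -
    obtain y where y: "y \<in> Y" "supnorm \<Gamma> (\<lambda>g. w g - y g) \<le> C * supnorm \<Gamma>' (restr w \<Gamma>')"
      using C[OF w] by blast
    have v: "(\<lambda>g. w g - y g) \<in> X"
      using w y(1) Y_subset_X unfolding bd_space_def by (intro cspan_diff[OF Gam_nonempty d_linf]) auto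
    moreover have "\<forall>g\<in>\<Gamma>'. w g - y g = w g" using Y_vanishes_on_\<Gamma>'[OF y(1)] by simp
    moreover have "\<forall>g\<in>\<Gamma>. \<bar>w g - y g\<bar> \<le> C * supnorm \<Gamma>' (restr w \<Gamma>')"
      using linf_abs_le[OF X_linf[OF v]] y(2) by fastforce
    ultimately show ?thesis by (intro bexI[where x = "\<lambda>g. w g - y g"]) auto
  qed
  with \<open>C > 0\<close> show ?thesis using that by blast
qed

text \<open>Lift the increments of approximations \<open>W\<^sub>n\<close> of \<open>x'\<close> with control of their
  norms and sum the resulting geometrically decaying series in \<open>X\<close>.\<close>

lemma restr_onto_bd_space_sub:
  assumes x': "x' \<in> bd_space G' I'"
  shows "\<exists>x\<in>X. restr x \<Gamma>' = x'"
proof -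
  obtain C where "C > 0" and lift: "\<And>w. w \<in> X \<Longrightarrow>
      \<exists>v\<in>X. (\<forall>g\<in>\<Gamma>'. v g = w g) \<and> (\<forall>g\<in>\<Gamma>. \<bar>v g\<bar> \<le> C * supnorm \<Gamma>' (restr w \<Gamma>'))"
    using bounded_lifting by blast
  have "\<forall>n. \<exists>w. w \<in> X \<and> (\<forall>g\<in>\<Gamma>'. \<bar>x' g - w g\<bar> < (1/2)^n)"
    using bd_space_sub_approx_by_X[OF x'] by (simp add: Bex_def)
  from choice[OF this] obtain W where "\<forall>n. W n \<in> X \<and> (\<forall>g\<in>\<Gamma>'. \<bar>x' g - W n g\<bar> < (1/2)^n)"
    by blast
  then have W: "\<And>n. W n \<in> X" and W_approx: "\<And>n g. g \<in> \<Gamma>' \<Longrightarrow> \<bar>x' g - W n g\<bar> < (1/2)^n"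
    by blast+
  have "\<exists>v. v \<in> X \<and> (\<forall>g\<in>\<Gamma>'. v g = W (Suc n) g - W n g) \<and> (\<forall>g\<in>\<Gamma>. \<bar>v g\<bar> \<le> (2 * C) * (1/2)^n)" for n
  proof -
    have inc: "(\<lambda>g. W (Suc n) g - W n g) \<in> X"
      using W unfolding bd_space_def by (intro cspan_diff[OF Gam_nonempty d_linf])
    have "supnorm \<Gamma>' (restr (\<lambda>g. W (Suc n) g - W n g) \<Gamma>') \<le> 2 * (1/2)^n"
    proof (rule supnorm_least[OF \<Gamma>'_nonempty])
      fix g assume g: "g \<in> \<Gamma>'"
      have "(1/2::real)^Suc n \<le> (1/2)^n" by simp
      then have "\<bar>x' g - W (Suc n) g\<bar> < (1/2)^n" using W_approx[OF g, of "Suc n"] by linarith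
      then show "\<bar>restr (\<lambda>g. W (Suc n) g - W n g) \<Gamma>' g\<bar> \<le> 2 * (1/2)^n"
        using W_approx[OF g, of n] g unfolding restr_def abs_less_iff abs_le_iff by simp
    qed
    then have "C * supnorm \<Gamma>' (restr (\<lambda>g. W (Suc n) g - W n g) \<Gamma>') \<le> (2 * C) * (1/2)^n"
      using \<open>C > 0\<close> by simp
    moreover obtain v where "v \<in> X" "\<forall>g\<in>\<Gamma>'. v g = W (Suc n) g - W n g"
      "\<forall>g\<in>\<Gamma>. \<bar>v g\<bar> \<le> C * supnorm \<Gamma>' (restr (\<lambda>g. W (Suc n) g - W n g) \<Gamma>')"
      using lift[OF inc] by blast
    ultimately show ?thesis by (intro exI[of _ v]) force
  qed
  then have "\<forall>n. \<exists>v. v \<in> X \<and> (\<forall>g\<in>\<Gamma>'. v g = W (Suc n) g - W n g) \<and> (\<forall>g\<in>\<Gamma>. \<bar>v g\<bar> \<le> (2 * C) * (1/2)^n)"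
    by blast
  from choice[OF this] obtain V where "\<forall>n. V n \<in> X \<and> (\<forall>g\<in>\<Gamma>'. V n g = W (Suc n) g - W n g)
      \<and> (\<forall>g\<in>\<Gamma>. \<bar>V n g\<bar> \<le> (2 * C) * (1/2)^n)"
    by blast
  then have V: "\<And>n. V n \<in> X" and V_eq: "\<And>n g. g \<in> \<Gamma>' \<Longrightarrow> V n g = W (Suc n) g - W n g"
    and V_bound: "\<And>n g. g \<in> \<Gamma> \<Longrightarrow> \<bar>V n g\<bar> \<le> (2 * C) * (1/2)^n"
    by blast+
  define x where "x g = W 0 g + (\<Sum>n. V n g)" for g
  have "(\<lambda>g. W 0 g + (\<Sum>n. V n g)) \<in> cspan \<Gamma> \<Gamma> d"
    using W V V_bound unfolding bd_space_def by (intro cspan_geometric_series[OF Gam_nonempty d_linf])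
  then have "x \<in> X" by (simp add: x_def[abs_def] bd_space_def)
  moreover have "restr x \<Gamma>' = x'"
  proof
    fix g
    show "restr x \<Gamma>' g = x' g"
    proof (cases "g \<in> \<Gamma>'")
      case True
      have "(\<lambda>n. W n g) \<longlonglongrightarrow> x' g"
        using W_approx[OF True] by (rule LIMSEQ_geometric_approx)
      then have "(\<lambda>n. V n g) sums (x' g - W 0 g)"
        using telescope_sums V_eq[OF True] by simp
      then show ?thesis using True by (simp add: x_def restr_def sums_iff)
    next
      case False
      then show ?thesis
        using linf_zero[OF cspan_linf[OF x'[unfolded bd_space_sub]]] by (simp add: restr_def)
    qed
  qed
  ultimately show ?thesis by blast
qed

lemma restr_image_bd_space: "(\<lambda>x. restr x \<Gamma>') ` X = bd_space G' I'"
proof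
  show "(\<lambda>x. restr x \<Gamma>') ` X \<subseteq> bd_space G' I'" using restr_in_bd_space_sub by blast
  show "bd_space G' I' \<subseteq> (\<lambda>x. restr x \<Gamma>') ` X"
  proof
    fix x' assume "x' \<in> bd_space G' I'"
    then obtain x where "x \<in> X" "restr x \<Gamma>' = x'" using restr_onto_bd_space_sub by blast
    then show "x' \<in> (\<lambda>x. restr x \<Gamma>') ` X" by blast
  qed
qed

end

theorem proposition1p12:
  fixes G :: "nat \<Rightarrow> 'g set"
    and I :: "nat \<Rightarrow> ('g \<Rightarrow> real) \<Rightarrow> ('g \<Rightarrow> real)"
    and \<Gamma>' :: "'g set"
  assumes "bd_data G I"
    and "self_determined G I \<Gamma>'"
  shows "(\<lambda>x. restr x \<Gamma>') ` bd_space G I = bd_space (sub_G G \<Gamma>') (sub_I G I \<Gamma>')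
       \<and> {x \<in> bd_space G I. restr x \<Gamma>' = (\<lambda>_. 0)} = cspan (Gam G) (Gam G - \<Gamma>') (bd_d G I)
       \<and> (\<exists>C>0. \<forall>x\<in>bd_space G I. \<exists>y\<in>cspan (Gam G) (Gam G - \<Gamma>') (bd_d G I).
            supnorm (Gam G) (\<lambda>g. x g - y g) \<le> C * supnorm \<Gamma>' (restr x \<Gamma>'))"
proof -
  interpret bd_self_determined G I \<Gamma>'
    using assms by unfold_locales
  show ?thesis
    by (intro conjI restr_image_bd_space kernel_restr_eq_Y quotient_estimate)
qed

end
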